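(* Let $B$ be a commutative ring with identity and $A$ a subring of $B$ containing the identity of $B$. Let $i^*:\operatorname{spec} B\to \operatorname{spec} A$ be the map $i^*(P)=P\cap A$. Then $A$ is a dense subring of $B$ if and only if $i^*$ is one-one and open, where "open" means: for every open set $U$ of $\operatorname{spec} B$, the set $i^*(U)$ is open in the subspace $i^*(\operatorname{spec} B)$ of $\operatorname{spec} A$.
   Context: All rings are commutative with identity; subrings contain the identity of the larger ring. $\operatorname{spec} R$ denotes the set of prime ideals of $R$ with the Zariski topology. A subring $A$ of a ring $B$ is called a dense subring of $B$ if for every ideal $I$ of $B$ and every $b\in B$ with $b\notin \operatorname{rad}(I)$, there exists $a\in B$ with $a\notin \operatorname{rad}(I)$ such that $ab\in A$. Here $\operatorname{rad}(I)$ is the radical of $I$ in $B$. *)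

theory Defs
  imports "HOL-Algebra.Algebra"
begin

definition spec :: "('a, 'b) ring_scheme \<Rightarrow> 'a set set" where
  "spec R = {P. primeideal P R}"

definition zariski_open :: "('a, 'b) ring_scheme \<Rightarrow> 'a set set \<Rightarrow> bool" where
  "zariski_open R U \<longleftrightarrow> (\<exists>S. S \<subseteq> carrier R \<and> U = {P \<in> spec R. \<not> S \<subseteq> P})"

definition rad :: "('a, 'b) ring_scheme \<Rightarrow> 'a set \<Rightarrow> 'a set" where
  "rad R I = {x \<in> carrier R. \<exists>n::nat. x [^]\<^bsub>R\<^esub> n \<in> I}"

definition dense_subring :: "'a set \<Rightarrow> ('a, 'b) ring_scheme \<Rightarrow> bool" where
  "dense_subring A B \<longleftrightarrow>
     (\<forall>I b. ideal I B \<longrightarrow> b \<in> carrier B \<longrightarrow> b \<notin> rad B I \<longrightarrow>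
        (\<exists>a \<in> carrier B. a \<notin> rad B I \<and> a \<otimes>\<^bsub>B\<^esub> b \<in> A))"

end

theory Submission
  imports Defs
begin

text \<open>By Krull's lemma the radical of an ideal is the intersection of the primes containing it,
  so density says: for every prime P of B and every b \<notin> P there is a \<notin> P with ab \<in> A.
  Injectivity follows since b \<in> P - Q would give a \<notin> Q with ab \<in> P \<inter> A = Q \<inter> A.
  Openness: the contraction of the basic open set D(S) is the trace of D(T) with T = A \<inter> BS.
  Conversely, if b \<notin> P, write the contraction of D(b) as the trace of some D(T) and pick
  t \<in> T - P. By injectivity t lies in every prime containing b, so t^n = cb for some n and c;
  then cb \<in> A and c \<notin> P.\<close>

lemma (in cring) maximal_ideal_avoiding_powers_is_prime:
  assumes M: "ideal M R" and x: "x \<in> carrier R"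
    and avoid: "\<And>n::nat. x [^] n \<notin> M"
    and maximal: "\<And>K. ideal K R \<Longrightarrow> M \<subseteq> K \<Longrightarrow> (\<forall>n::nat. x [^] n \<notin> K) \<Longrightarrow> K = M"
  shows "primeideal M R"
proof -
  interpret M: ideal M R by fact
  have enlarge: "\<exists>n m r. m \<in> M \<and> r \<in> carrier R \<and> x [^] (n::nat) = m \<oplus> r \<otimes> a"
    if a: "a \<in> carrier R" "a \<notin> M" for a
  proof (rule ccontr)
    assume none: "\<not> ?thesis"
    let ?K = "M <+>\<^bsub>R\<^esub> PIdl a"
    have K_eq: "?K = {y. \<exists>m r. m \<in> M \<and> r \<in> carrier R \<and> y = m \<oplus> r \<otimes> a}"
      unfolding set_add_def' cgenideal_def by blast
    have "m \<in> ?K" if "m \<in> M" for m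
      using that a unfolding K_eq by (intro CollectI exI[of _ m] exI[of _ \<zero>]) auto
    then have "?K = M"
      using maximal[of ?K] add_ideals[OF M cgenideal_ideal[OF a(1)]] none unfolding K_eq by blast
    moreover have "a \<in> ?K"
      using a unfolding K_eq by (intro CollectI exI[of _ \<zero>] exI[of _ \<one>]) auto
    ultimately show False using a by blast
  qed
  show ?thesis
  proof (rule primeidealI[OF M is_cring])
    show "carrier R \<noteq> M" using avoid[of 0] by auto
  next
    fix a b assume ab: "a \<in> carrier R" "b \<in> carrier R" "a \<otimes> b \<in> M"
    show "a \<in> M \<or> b \<in> M"
    proof (rule ccontr)
      assume "\<not> (a \<in> M \<or> b \<in> M)"
      then obtain n m1 r k m2 s where
        m1: "m1 \<in> M" "r \<in> carrier R" "x [^] (n::nat) = m1 \<oplus> r \<otimes> a" and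
        m2: "m2 \<in> M" "s \<in> carrier R" "x [^] (k::nat) = m2 \<oplus> s \<otimes> b"
        using enlarge[of a] enlarge[of b] ab by blast
      have carr: "m1 \<in> carrier R" "m2 \<in> carrier R" using m1(1) m2(1) by auto
      have "x [^] (n + k) = x [^] n \<otimes> x [^] k" using x by (simp add: nat_pow_mult)
      also have "\<dots> = m1 \<otimes> (m2 \<oplus> s \<otimes> b) \<oplus> ((r \<otimes> a) \<otimes> m2 \<oplus> (r \<otimes> s) \<otimes> (a \<otimes> b))"
      proof -
        have "(r \<otimes> a) \<otimes> (s \<otimes> b) = (r \<otimes> s) \<otimes> (a \<otimes> b)"
          using m1 m2 ab by (simp add: m_ac)
        then show ?thesis using m1 m2 carr ab by (simp add: l_distr r_distr a_ac)
      qed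
      also have "\<dots> \<in> M"
      proof (intro M.a_closed)
        show "m1 \<otimes> (m2 \<oplus> s \<otimes> b) \<in> M" using m1 m2 ab by (simp add: M.I_r_closed)
        show "(r \<otimes> a) \<otimes> m2 \<in> M" using m1 m2 ab by (simp add: M.I_l_closed)
        show "(r \<otimes> s) \<otimes> (a \<otimes> b) \<in> M" using m1 m2 ab by (simp add: M.I_l_closed)
      qed
      finally show False using avoid by blast
    qed
  qed
qed

lemma (in cring) exists_primeideal_avoiding_powers:
  assumes J: "ideal J R" and x: "x \<in> carrier R" and avoid: "\<forall>n::nat. x [^] n \<notin> J"
  obtains P where "primeideal P R" "J \<subseteq> P" "x \<notin> P"
proof -
  define F where "F = {K. ideal K R \<and> J \<subseteq> K \<and> (\<forall>n::nat. x [^] n \<notin> K)}"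
  have "\<exists>M\<in>F. \<forall>K\<in>F. M \<subseteq> K \<longrightarrow> K = M"
  proof (rule subset_Zorn_nonempty)
    show "F \<noteq> {}" using J avoid unfolding F_def by auto
  next
    fix C assume C: "C \<noteq> {}" "subset.chain F C"
    then have "subset.chain {I. ideal I R} C" unfolding pred_on.chain_def F_def by auto
    then have "ideal (\<Union>C) R" using chain_Union_is_ideal[of C] C(1) by simp
    moreover have "J \<subseteq> \<Union>C" using C unfolding pred_on.chain_def F_def by blast
    moreover have "\<forall>n::nat. x [^] n \<notin> \<Union>C" using C unfolding pred_on.chain_def F_def by auto
    ultimately show "\<Union>C \<in> F" unfolding F_def by blast
  qed
  then obtain M where "M \<in> F" and maximal: "\<And>K. K \<in> F \<Longrightarrow> M \<subseteq> K \<Longrightarrow> K = M"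
    by blast
  then have M: "ideal M R" "J \<subseteq> M" "\<And>n::nat. x [^] n \<notin> M" unfolding F_def by auto
  have "primeideal M R"
  proof (rule maximal_ideal_avoiding_powers_is_prime[OF M(1) x M(3)])
    fix K assume "ideal K R" "M \<subseteq> K" "\<forall>n::nat. x [^] n \<notin> K"
    then show "K = M" using maximal M(2) unfolding F_def by blast
  qed
  moreover have "x \<notin> M" using M(3)[of 1] x by simp
  ultimately show thesis using that M(2) by blast
qed

lemma (in primeideal) pow_mem_imp_mem:
  assumes "x \<in> carrier R" and "x [^] (n::nat) \<in> I"
  shows "x \<in> I"
  using assms(2)
proof (induction n)
  case 0
  then show ?case using I_notcarr one_imp_carrier by simp
next
  case (Suc n)
  then show ?case using I_prime[of "x [^] n" x] assms(1) by auto
qed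

lemma rad_eq_Inter_primeideals:
  assumes R: "cring R" and I: "ideal I R"
  shows "rad R I = carrier R \<inter> \<Inter>{P. primeideal P R \<and> I \<subseteq> P}"
proof (intro equalityI subsetI)
  fix x assume "x \<in> rad R I"
  then obtain n :: nat where x: "x \<in> carrier R" "x [^]\<^bsub>R\<^esub> n \<in> I" unfolding rad_def by blast
  have "x \<in> P" if "primeideal P R" "I \<subseteq> P" for P
    using primeideal.pow_mem_imp_mem[OF that(1) x(1)] x(2) that(2) by blast
  then show "x \<in> carrier R \<inter> \<Inter>{P. primeideal P R \<and> I \<subseteq> P}" using x(1) by blast
next
  fix x assume x: "x \<in> carrier R \<inter> \<Inter>{P. primeideal P R \<and> I \<subseteq> P}"
  show "x \<in> rad R I"
  proof (rule ccontr)
    assume "x \<notin> rad R I"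
    then have "\<forall>n::nat. x [^]\<^bsub>R\<^esub> n \<notin> I" using x unfolding rad_def by blast
    then obtain P where "primeideal P R" "I \<subseteq> P" "x \<notin> P"
      using cring.exists_primeideal_avoiding_powers[OF R I] x by blast
    then show False using x by blast
  qed
qed

lemma rad_primeideal:
  assumes "cring R" and "primeideal P R"
  shows "rad R P = P"
  using rad_eq_Inter_primeideals[OF assms(1) primeideal.axioms(1)[OF assms(2)]] assms(2)
    ideal.Icarr[OF primeideal.axioms(1)[OF assms(2)]] by blast

lemma primeideal_Int_subring:
  assumes "cring B" and "subring A B" and "primeideal P B"
  shows "primeideal (P \<inter> A) (B\<lparr>carrier := A\<rparr>)"
proof -
  interpret cring B by fact
  have "ring_hom_ring (B\<lparr>carrier := A\<rparr>) B id"
    using subring_is_ring[OF assms(2)] ring_axioms subringE(1)[OF assms(2)]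
    by (intro ring_hom_ringI2) (auto simp: ring_hom_def)
  moreover have "cring (B\<lparr>carrier := A\<rparr>)"
    using subcring_iff subcringI' assms(2) subringE(1) by blast
  ultimately have "primeideal {r \<in> A. id r \<in> P} (B\<lparr>carrier := A\<rparr>)"
    using ring_hom_ring.primeideal_vimage assms(3) by fastforce
  moreover have "{r \<in> A. id r \<in> P} = P \<inter> A" by auto
  ultimately show ?thesis by simp
qed

lemma subring_nat_pow_closed:
  assumes "ring B" and "subring A B" and "t \<in> A"
  shows "t [^]\<^bsub>B\<^esub> (n::nat) \<in> A"
  using monoid.nat_pow_closed[OF ring.is_monoid[OF ring.subring_is_ring[OF assms(1,2)]]] assms(3)
    monoid.nat_pow_consistent[OF ring.is_monoid[OF assms(1)]] by fastforce

lemma dense_subring_iff_primeideals: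
  assumes B: "cring B"
  shows "dense_subring A B \<longleftrightarrow>
    (\<forall>P\<in>spec B. \<forall>b\<in>carrier B - P. \<exists>a\<in>carrier B - P. a \<otimes>\<^bsub>B\<^esub> b \<in> A)"
proof
  assume dense: "dense_subring A B"
  show "\<forall>P\<in>spec B. \<forall>b\<in>carrier B - P. \<exists>a\<in>carrier B - P. a \<otimes>\<^bsub>B\<^esub> b \<in> A"
  proof (intro ballI)
    fix P b assume "P \<in> spec B" and b: "b \<in> carrier B - P"
    then have "primeideal P B" by (simp add: spec_def)
    then show "\<exists>a\<in>carrier B - P. a \<otimes>\<^bsub>B\<^esub> b \<in> A"
      using dense b rad_primeideal[OF B] primeideal.axioms(1) unfolding dense_subring_def by fastforce
  qed
next
  assume primes: "\<forall>P\<in>spec B. \<forall>b\<in>carrier B - P. \<exists>a\<in>carrier B - P. a \<otimes>\<^bsub>B\<^esub> b \<in> A"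
  show "dense_subring A B" unfolding dense_subring_def
  proof (intro allI impI)
    fix I b assume I: "ideal I B" and b: "b \<in> carrier B" "b \<notin> rad B I"
    obtain P where P: "primeideal P B" "I \<subseteq> P" "b \<notin> P"
      using b rad_eq_Inter_primeideals[OF B I] by blast
    then obtain a where a: "a \<in> carrier B - P" "a \<otimes>\<^bsub>B\<^esub> b \<in> A"
      using primes b(1) P(1,3) unfolding spec_def by blast
    moreover have "a \<notin> rad B I" using a P rad_eq_Inter_primeideals[OF B I] by blast
    ultimately show "\<exists>a\<in>carrier B. a \<notin> rad B I \<and> a \<otimes>\<^bsub>B\<^esub> b \<in> A" by blast
  qed
qed

lemma dense_subring_inj_on_contraction:
  assumes B: "cring B" and dense: "dense_subring A B"
  shows "inj_on (\<lambda>P. P \<inter> A) (spec B)"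
proof -
  have "P \<subseteq> Q" if PQ: "P \<in> spec B" "Q \<in> spec B" "P \<inter> A = Q \<inter> A" for P Q
  proof
    interpret P: primeideal P B using PQ(1) by (simp add: spec_def)
    interpret Q: primeideal Q B using PQ(2) by (simp add: spec_def)
    fix b assume b: "b \<in> P"
    then have b_carrier: "b \<in> carrier B" by (rule P.Icarr)
    show "b \<in> Q"
    proof (rule ccontr)
      assume "b \<notin> Q"
      then obtain a where a: "a \<in> carrier B - Q" "a \<otimes>\<^bsub>B\<^esub> b \<in> A"
        using dense b_carrier PQ(2) unfolding dense_subring_iff_primeideals[OF B] by blast
      then have "a \<otimes>\<^bsub>B\<^esub> b \<in> Q" using b P.I_l_closed PQ(3) by blast
      then show False using Q.I_prime a(1) b_carrier \<open>b \<notin> Q\<close> by blast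
    qed
  qed
  then show ?thesis unfolding inj_on_def by blast
qed

lemma dense_subring_contraction_open:
  assumes B: "cring B" and A: "subring A B" and dense: "dense_subring A B"
    and U: "zariski_open B U"
  shows "\<exists>W. zariski_open (B\<lparr>carrier := A\<rparr>) W \<and>
    (\<lambda>P. P \<inter> A) ` U = W \<inter> (\<lambda>P. P \<inter> A) ` spec B"
proof -
  obtain S where S: "S \<subseteq> carrier B" and U_eq: "U = {P \<in> spec B. \<not> S \<subseteq> P}"
    using U unfolding zariski_open_def by blast
  define T where "T = {t \<in> A. \<exists>s\<in>S. \<exists>c\<in>carrier B. t = c \<otimes>\<^bsub>B\<^esub> s}"
  define W where "W = {Q \<in> spec (B\<lparr>carrier := A\<rparr>). \<not> T \<subseteq> Q}"
  have "P \<inter> A \<in> W \<longleftrightarrow> \<not> S \<subseteq> P" if P: "P \<in> spec B" for P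
  proof -
    interpret primeideal P B using P by (simp add: spec_def)
    have "\<not> T \<subseteq> P \<inter> A \<longleftrightarrow> \<not> S \<subseteq> P"
    proof
      assume "\<not> T \<subseteq> P \<inter> A"
      then obtain s c where "s \<in> S" "c \<in> carrier B" "c \<otimes>\<^bsub>B\<^esub> s \<notin> P"
        unfolding T_def by blast
      then show "\<not> S \<subseteq> P" using I_l_closed by blast
    next
      assume "\<not> S \<subseteq> P"
      then obtain s where s: "s \<in> S" "s \<notin> P" by blast
      then obtain a where a: "a \<in> carrier B - P" "a \<otimes>\<^bsub>B\<^esub> s \<in> A"
        using dense S P unfolding dense_subring_iff_primeideals[OF B] by blast
      have "a \<otimes>\<^bsub>B\<^esub> s \<notin> P" using I_prime[of a s] a(1) s S by blast
      then show "\<not> T \<subseteq> P \<inter> A" using a s unfolding T_def by blast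
    qed
    moreover have "P \<inter> A \<in> spec (B\<lparr>carrier := A\<rparr>)"
      using primeideal_Int_subring[OF B A] P by (simp add: spec_def)
    ultimately show ?thesis unfolding W_def by blast
  qed
  then have "(\<lambda>P. P \<inter> A) ` U = W \<inter> (\<lambda>P. P \<inter> A) ` spec B"
    unfolding U_eq by blast
  moreover have "zariski_open (B\<lparr>carrier := A\<rparr>) W"
    unfolding zariski_open_def W_def by (intro exI[of _ T]) (auto simp: T_def)
  ultimately show ?thesis by blast
qed

lemma contraction_inj_open_imp_dense_subring:
  assumes B: "cring B" and A: "subring A B"
    and inj: "inj_on (\<lambda>P. P \<inter> A) (spec B)"
    and contraction_open: "\<And>U. zariski_open B U \<Longrightarrow> \<exists>W. zariski_open (B\<lparr>carrier := A\<rparr>) W \<and>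
      (\<lambda>P. P \<inter> A) ` U = W \<inter> (\<lambda>P. P \<inter> A) ` spec B"
  shows "dense_subring A B"
  unfolding dense_subring_iff_primeideals[OF B]
proof (intro ballI)
  interpret B: cring B by fact
  fix P b assume P: "P \<in> spec B" and b: "b \<in> carrier B - P"
  define U where "U = {Q \<in> spec B. \<not> {b} \<subseteq> Q}"
  have "zariski_open B U" unfolding zariski_open_def U_def using b by (intro exI[of _ "{b}"]) auto
  then obtain W where "zariski_open (B\<lparr>carrier := A\<rparr>) W"
    and image_U: "(\<lambda>Q. Q \<inter> A) ` U = W \<inter> (\<lambda>Q. Q \<inter> A) ` spec B"
    using contraction_open by blast
  then obtain T where T: "T \<subseteq> A" and W_eq: "W = {Q \<in> spec (B\<lparr>carrier := A\<rparr>). \<not> T \<subseteq> Q}"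
    unfolding zariski_open_def by auto
  have "P \<in> U" using P b unfolding U_def by auto
  then have "P \<inter> A \<in> W" using image_U by blast
  then obtain t where t: "t \<in> T" "t \<notin> P" using W_eq T by auto
  have tA: "t \<in> A" and tB: "t \<in> carrier B" using t T subringE(1)[OF A] by auto
  have "t \<in> rad B (PIdl\<^bsub>B\<^esub> b)"
  proof (rule ccontr)
    assume "t \<notin> rad B (PIdl\<^bsub>B\<^esub> b)"
    moreover have "ideal (PIdl\<^bsub>B\<^esub> b) B" using b by (simp add: B.cgenideal_ideal)
    ultimately obtain Q where Q: "primeideal Q B" "PIdl\<^bsub>B\<^esub> b \<subseteq> Q" "t \<notin> Q"
      using rad_eq_Inter_primeideals[OF B] tB by blast
    then have Q_spec: "Q \<in> spec B" and "Q \<notin> U"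
      using B.cgenideal_self b unfolding U_def spec_def by auto
    have "Q \<inter> A \<in> W"
      using W_eq t Q(3) primeideal_Int_subring[OF B A Q(1)] by (auto simp: spec_def)
    then obtain Q' where "Q' \<in> U" "Q \<inter> A = Q' \<inter> A" using image_U Q_spec by blast
    then show False using inj Q_spec \<open>Q \<notin> U\<close> unfolding U_def inj_on_def by blast
  qed
  then obtain n c where c: "c \<in> carrier B" "t [^]\<^bsub>B\<^esub> (n::nat) = c \<otimes>\<^bsub>B\<^esub> b"
    unfolding rad_def cgenideal_def by blast
  interpret P: primeideal P B using P by (simp add: spec_def)
  have "c \<notin> P"
  proof
    assume "c \<in> P"
    then have "t [^]\<^bsub>B\<^esub> n \<in> P" using c b P.I_r_closed by auto
    then show False using P.pow_mem_imp_mem tB t(2) by blast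
  qed
  moreover have "c \<otimes>\<^bsub>B\<^esub> b \<in> A" using c(2) subring_nat_pow_closed[OF B.ring_axioms A tA] by metis
  ultimately show "\<exists>a\<in>carrier B - P. a \<otimes>\<^bsub>B\<^esub> b \<in> A" using c(1) by blast
qed

theorem theorem4p1:
  fixes B :: "('a, 'b) ring_scheme" and A :: "'a set"
  assumes "cring B" and "subring A B"
  shows "dense_subring A B \<longleftrightarrow>
     (inj_on (\<lambda>P. P \<inter> A) (spec B) \<and>
      (\<forall>U. zariski_open B U \<longrightarrow>
         (\<exists>W. zariski_open (B\<lparr>carrier := A\<rparr>) W \<and>
              (\<lambda>P. P \<inter> A) ` U = W \<inter> (\<lambda>P. P \<inter> A) ` spec B)))"
proof (intro iffI conjI allI impI)
  assume "dense_subring A B"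
  then show "inj_on (\<lambda>P. P \<inter> A) (spec B)" by (rule dense_subring_inj_on_contraction[OF assms(1)])
next
  fix U assume "dense_subring A B" and "zariski_open B U"
  then show "\<exists>W. zariski_open (B\<lparr>carrier := A\<rparr>) W \<and>
    (\<lambda>P. P \<inter> A) ` U = W \<inter> (\<lambda>P. P \<inter> A) ` spec B"
    by (rule dense_subring_contraction_open[OF assms])
next
  assume "inj_on (\<lambda>P. P \<inter> A) (spec B) \<and> (\<forall>U. zariski_open B U \<longrightarrow>
    (\<exists>W. zariski_open (B\<lparr>carrier := A\<rparr>) W \<and> (\<lambda>P. P \<inter> A) ` U = W \<inter> (\<lambda>P. P \<inter> A) ` spec B))"
  then show "dense_subring A B"
    by (intro contraction_inj_open_imp_dense_subring[OF assms]) auto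
qed

end
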